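(* Let $g_1,\dots,g_p:\mathbb{R}^n\to\mathbb{R}$ be convex and twice continuously differentiable, and let $\tau_{\mu_1},\dots,\tau_{\mu_p}>0$. Consider the system with state $\mu=(\mu_1,\dots,\mu_p)$, $\mu_i(0)\ge 0$, driven by a differentiable input $\tilde u(t)\in\mathbb{R}^n$: $$\tau_{\mu_i}\dot\mu_i=(g_i(\tilde u))^+_{\mu_i},\qquad (g_i(\tilde u))^+_{\mu_i}=\begin{cases} g_i(\tilde u) & \text{if } \mu_i>0 \text{ or } g_i(\tilde u)>0,\\ 0 & \text{otherwise},\end{cases}$$ $i=1,\dots,p$. Let $\mathcal P$ be the power set of $\{1,\dots,p\}$ and define the switching signal $\sigma:[0,\infty)\to\mathcal P$ by $\sigma(t)=\{i: \mu_i(t)=0 \text{ and } g_i(\tilde u(t))\le 0\}$, so that $\tau_{\mu_i}\dot\mu_i=g_i(\tilde u)$ for $i\notin\sigma(t)$ and $\tau_{\mu_i}\dot\mu_i=0$ for $i\in\sigma(t)$. For each $\sigma_q\in\mathcal P$ define the storage function $S_{\sigma_q}(\mu)=\frac12\sum_{i\notin\sigma_q}\tau_{\mu_i}\dot\mu_i^2$. Let $u_s=\dot{\tilde u}$ and $y_s=\dot{\tilde y}$, where $\tilde y=\sum_{i=1}^p\mu_i\nabla_{\tilde u}g_i(\tilde u)$. Then the switched system is passive with the multiple storage functions $S_{\sigma_q}$, input $u_s$ and output $y_s$ in the following sense: for each $\sigma_p\in\mathcal P$ and every pair of switching times $t_i<t_j$ such that $\sigma(t_i)=\sigma(t_j)=\sigma_p$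 and $\sigma(t_k)\neq\sigma_p$ for all switching times $t_k$ with $t_i<t_k<t_j$, $$S_{\sigma_p}(\mu(t_j))-S_{\sigma_p}(\mu(t_i))\le\int_{t_i}^{t_j}u_s^\top y_s\,dt.$$
   Context: The storage functions are evaluated along solutions, where $\dot\mu_i$ is given by the dynamics; switching times are the times at which $\sigma(t)$ changes value. *)

theory Defs
  imports "HOL-Analysis.Analysis"
begin

definition C2_fun :: "('a::euclidean_space \<Rightarrow> real) \<Rightarrow> bool" where
  "C2_fun f \<longleftrightarrow> (\<exists>(f' :: 'a \<Rightarrow> ('a \<Rightarrow>\<^sub>L real)) (f'' :: 'a \<Rightarrow> ('a \<Rightarrow>\<^sub>L ('a \<Rightarrow>\<^sub>L real))).
      (\<forall>x. (f has_derivative blinfun_apply (f' x)) (at x)) \<and>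
      (\<forall>x. (f' has_derivative blinfun_apply (f'' x)) (at x)) \<and>
      continuous_on UNIV f'')"

definition proj_plus :: "real \<Rightarrow> real \<Rightarrow> real" where
  "proj_plus gv m = (if m > 0 \<or> gv > 0 then gv else 0)"

definition switching_signal ::
  "nat \<Rightarrow> (nat \<Rightarrow> 'a \<Rightarrow> real) \<Rightarrow> (real \<Rightarrow> 'a) \<Rightarrow> (nat \<Rightarrow> real \<Rightarrow> real) \<Rightarrow> real \<Rightarrow> nat set" where
  "switching_signal p g u mu t = {i \<in> {1..p}. mu i t = 0 \<and> g i (u t) \<le> 0}"

definition switching_time :: "(real \<Rightarrow> 'b) \<Rightarrow> real \<Rightarrow> bool" where
  "switching_time sig t \<longleftrightarrow> t \<ge> 0 \<and> (\<forall>e>0. \<exists>s\<ge>0. \<bar>s - t\<bar> < e \<and> sig s \<noteq> sig t)"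

text \<open>Storage function S_{sigma_q} = 1/2 * sum_{i notin sigma_q} tau_i * mudot_i^2,
  where mudot is the vector of state derivatives given by the dynamics.\<close>
definition storage :: "nat \<Rightarrow> (nat \<Rightarrow> real) \<Rightarrow> nat set \<Rightarrow> (nat \<Rightarrow> real) \<Rightarrow> real" where
  "storage p tau sq mudot = (1/2) * (\<Sum>i\<in>{1..p} - sq. tau i * (mudot i)\<^sup>2)"

end

theory Submission
  imports Defs
begin

text \<open>Let \<open>E(t) = \<Sum>\<^sub>i \<tau>\<^sub>i \<mu>\<^sub>i'(t)\<^sup>2 / 2\<close>. Whenever \<open>\<sigma>(t) = \<sigma>\<^sub>p\<close>, the storage function
  \<open>S\<^bsub>\<sigma>\<^sub>p\<^esub>\<close> equals \<open>E(t)\<close>, since the indices it omits have \<open>\<mu>\<^sub>i' = 0\<close>. So it suffices to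
  show \<open>E(t\<^sub>j) - E(t\<^sub>i) \<le> \<integral> u\<^sub>s\<^sup>T y\<^sub>s\<close> on every interval. While constraint \<open>i\<close> is
  active its energy is \<open>g\<^sub>i(u)\<^sup>2 / (2 \<tau>\<^sub>i)\<close>, with derivative \<open>\<mu>\<^sub>i' \<nabla>g\<^sub>i(u)\<^sup>T u'\<close>; an
  inactive term is zero and can only leave zero through a point where \<open>g\<^sub>i(u) = 0\<close>,
  where it is dominated by the active energy. On the other hand
  \<open>u\<^sub>s\<^sup>T y\<^sub>s = \<Sum>\<^sub>i \<mu>\<^sub>i' \<nabla>g\<^sub>i(u)\<^sup>T u' + \<Sum>\<^sub>i \<mu>\<^sub>i u'\<^sup>T (\<nabla>g\<^sub>i(u))'\<close>, and the second sum is
  nonnegative because \<open>\<mu>\<^sub>i \<ge> 0\<close> and gradients of convex functions are monotone. As \<open>E\<close>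
  need not be differentiable, the growth bound is expressed by one-sided Dini derivatives
  and integrated with gauges.\<close>

definition right_slope_le :: "(real \<Rightarrow> real) \<Rightarrow> real \<Rightarrow> real \<Rightarrow> bool" where
  "right_slope_le h D t \<longleftrightarrow> (\<forall>e>0. \<forall>\<^sub>F s in at_right t. h s - h t \<le> (D + e) * (s - t))"

definition left_slope_le :: "(real \<Rightarrow> real) \<Rightarrow> real \<Rightarrow> real \<Rightarrow> bool" where
  "left_slope_le h D t \<longleftrightarrow> (\<forall>e>0. \<forall>\<^sub>F s in at_left t. h t - h s \<le> (D + e) * (t - s))"

lemma left_slope_le_iff_reflect:
  "left_slope_le h D t \<longleftrightarrow> right_slope_le (\<lambda>s. - h (- s)) D (- t)"
  unfolding left_slope_le_def right_slope_le_def at_left_minus eventually_filtermap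
  by (simp add: algebra_simps)

lemma right_slope_le_if_has_derivative:
  assumes "(h has_real_derivative D) (at_right t)"
  shows "right_slope_le h D t"
  unfolding right_slope_le_def
proof (intro allI impI)
  fix e :: real assume "e > 0"
  have "((\<lambda>s. (h s - h t) / (s - t)) \<longlongrightarrow> D) (at_right t)"
    using assms by (simp add: has_field_derivative_iff)
  then have "\<forall>\<^sub>F s in at_right t. (h s - h t) / (s - t) < D + e"
    using \<open>e > 0\<close> by (intro order_tendstoD(2)) auto
  with eventually_at_right_less[of t]
  show "\<forall>\<^sub>F s in at_right t. h s - h t \<le> (D + e) * (s - t)"
    by eventually_elim (simp add: divide_less_eq)
qed

lemma left_slope_le_if_has_derivative:
  assumes "(h has_real_derivative D) (at t)"
  shows "left_slope_le h D t"
proof -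
  have "(h has_real_derivative D) (at (- (- t)))"
    using assms by simp
  from DERIV_minus[OF DERIV_mirror[THEN iffD1, OF this]]
  have "((\<lambda>s. - h (- s)) has_real_derivative D) (at (- t))"
    by simp
  then have "((\<lambda>s. - h (- s)) has_real_derivative D) (at_right (- t))"
    by (rule has_field_derivative_at_within)
  then show ?thesis
    unfolding left_slope_le_iff_reflect by (rule right_slope_le_if_has_derivative)
qed

lemma right_slope_le_increment_mono:
  assumes "right_slope_le h D t" and "\<forall>\<^sub>F s in at_right t. k s - k t \<le> h s - h t"
  shows "right_slope_le k D t"
  unfolding right_slope_le_def
proof (intro allI impI)
  fix e :: real assume "e > 0"
  with assms(1) have "\<forall>\<^sub>F s in at_right t. h s - h t \<le> (D + e) * (s - t)"
    by (simp add: right_slope_le_def)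
  with assms(2) show "\<forall>\<^sub>F s in at_right t. k s - k t \<le> (D + e) * (s - t)"
    by eventually_elim simp
qed

lemma left_slope_le_increment_mono:
  assumes "left_slope_le h D t" and "\<forall>\<^sub>F s in at_left t. k t - k s \<le> h t - h s"
  shows "left_slope_le k D t"
  using assms unfolding left_slope_le_iff_reflect
  by (elim right_slope_le_increment_mono) (simp add: at_left_minus eventually_filtermap)

lemma right_slope_le_sum:
  assumes "finite I" and "\<And>i. i \<in> I \<Longrightarrow> right_slope_le (h i) (D i) t"
    and "(\<Sum>i\<in>I. D i) \<le> F"
  shows "right_slope_le (\<lambda>s. \<Sum>i\<in>I. h i s) F t"
  unfolding right_slope_le_def
proof (intro allI impI)
  fix e :: real assume "e > 0"
  define e' where "e' = e / (real (card I) + 1)"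
  have "e' > 0" and card_e': "real (card I) * e' \<le> e"
    using \<open>e > 0\<close> by (simp_all add: e'_def field_simps)
  have "\<forall>\<^sub>F s in at_right t. \<forall>i\<in>I. h i s - h i t \<le> (D i + e') * (s - t)"
    using assms(1,2) \<open>e' > 0\<close> by (auto simp: right_slope_le_def intro!: eventually_ball_finite)
  with eventually_at_right_less[of t]
  show "\<forall>\<^sub>F s in at_right t. (\<Sum>i\<in>I. h i s) - (\<Sum>i\<in>I. h i t) \<le> (F + e) * (s - t)"
  proof eventually_elim
    case (elim s)
    have "(\<Sum>i\<in>I. h i s) - (\<Sum>i\<in>I. h i t) \<le> (\<Sum>i\<in>I. (D i + e') * (s - t))"
      unfolding sum_subtractf[symmetric] using elim by (intro sum_mono) auto
    also have "\<dots> = ((\<Sum>i\<in>I. D i) + real (card I) * e') * (s - t)"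
      by (simp add: sum_distrib_right[symmetric] sum.distrib)
    also have "\<dots> \<le> (F + e) * (s - t)"
      using elim(1) card_e' assms(3) by (intro mult_right_mono) auto
    finally show ?case .
  qed
qed

lemma left_slope_le_sum:
  assumes "finite I" and "\<And>i. i \<in> I \<Longrightarrow> left_slope_le (h i) (D i) t"
    and "(\<Sum>i\<in>I. D i) \<le> F"
  shows "left_slope_le (\<lambda>s. \<Sum>i\<in>I. h i s) F t"
proof -
  have "right_slope_le (\<lambda>s. \<Sum>i\<in>I. - h i (- s)) F (- t)"
    using assms by (intro right_slope_le_sum) (auto simp: left_slope_le_iff_reflect)
  then show ?thesis
    by (simp add: left_slope_le_iff_reflect sum_negf)
qed

lemma right_slope_le_imp_local_bound:
  assumes "right_slope_le h D t" and "e > 0"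
  shows "\<exists>d>0. \<forall>s. t < s \<longrightarrow> s < t + d \<longrightarrow> h s - h t \<le> (D + e) * (s - t)"
proof -
  obtain c where "c > t" and "\<forall>s. t < s \<longrightarrow> s < c \<longrightarrow> h s - h t \<le> (D + e) * (s - t)"
    using assms by (auto simp: right_slope_le_def eventually_at_right_field)
  then show ?thesis by (intro exI[of _ "c - t"]) auto
qed

lemma left_slope_le_imp_local_bound:
  assumes "left_slope_le h D t" and "e > 0"
  shows "\<exists>d>0. \<forall>s. t - d < s \<longrightarrow> s < t \<longrightarrow> h t - h s \<le> (D + e) * (t - s)"
proof -
  obtain c where "c < t" and "\<forall>s. c < s \<longrightarrow> s < t \<longrightarrow> h t - h s \<le> (D + e) * (t - s)"
    using assms by (auto simp: left_slope_le_def eventually_at_left_field)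
  then show ?thesis by (intro exI[of _ "t - c"]) auto
qed

lemma increment_le_tagged_sum:
  fixes G f :: "real \<Rightarrow> real"
  assumes "a \<le> b" and div: "\<D> tagged_division_of {a..b}"
    and fine: "(\<lambda>t. ball t (d t)) fine \<D>"
    and right: "\<And>t s. t \<in> {a..<b} \<Longrightarrow> t < s \<Longrightarrow> s < t + d t \<Longrightarrow> G s - G t \<le> (f t + e) * (s - t)"
    and left: "\<And>t s. t \<in> {a<..b} \<Longrightarrow> t - d t < s \<Longrightarrow> s < t \<Longrightarrow> G t - G s \<le> (f t + e) * (t - s)"
  shows "G b - G a \<le> (\<Sum>(x, K)\<in>\<D>. Henstock_Kurzweil_Integration.content K *\<^sub>R f x) + e * (b - a)"
proof -
  have cell: "G (Sup K) - G (Inf K) \<le> Henstock_Kurzweil_Integration.content K * f x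
      + e * Henstock_Kurzweil_Integration.content K" if xK: "(x, K) \<in> \<D>" for x K
  proof -
    obtain c c' where K: "K = {c..c'}" "x \<in> K" "K \<subseteq> {a..b}" "K \<noteq> {}"
      using tagged_division_ofD(2,3,4)[OF div xK] by (metis box_real(2) empty_iff)
    then have cx: "c \<le> x" "x \<le> c'" "a \<le> c" "c' \<le> b" by auto
    have "K \<subseteq> ball x (d x)" "c \<in> K" "c' \<in> K"
      using fine xK K cx by (auto simp: fine_def)
    then have "x - d x < c" "c' < x + d x"
      by (auto simp: subset_eq dist_real_def)
    with cx have "G c' - G x \<le> (f x + e) * (c' - x)" "G x - G c \<le> (f x + e) * (x - c)"
      using right[of x c'] left[of x c] by (auto simp: le_less)
    then show ?thesis
      using K cx by (simp add: algebra_simps)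
  qed
  have "G b - G a = (\<Sum>(x, K)\<in>\<D>. G (Sup K) - G (Inf K))"
    using additive_tagged_division_1[OF \<open>a \<le> b\<close> div, of G] by simp
  also have "\<dots> \<le> (\<Sum>(x, K)\<in>\<D>. Henstock_Kurzweil_Integration.content K * f x
      + e * Henstock_Kurzweil_Integration.content K)"
    using cell by (intro sum_mono) auto
  also have "\<dots> = (\<Sum>(x, K)\<in>\<D>. Henstock_Kurzweil_Integration.content K *\<^sub>R f x)
      + e * (\<Sum>(x, K)\<in>\<D>. Henstock_Kurzweil_Integration.content K)"
    by (simp add: sum.distrib sum_distrib_left case_prod_unfold)
  also have "(\<Sum>(x, K)\<in>\<D>. Henstock_Kurzweil_Integration.content K) = b - a"
    using additive_content_tagged_division[of \<D> a b] div \<open>a \<le> b\<close> by simp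
  finally show ?thesis .
qed

lemma slope_le_imp_gauge:
  fixes G f :: "real \<Rightarrow> real"
  assumes right: "\<And>t. t \<in> {a..<b} \<Longrightarrow> right_slope_le G (f t) t"
    and left: "\<And>t. t \<in> {a<..b} \<Longrightarrow> left_slope_le G (f t) t" and "e > 0"
  obtains \<delta> where "\<And>t. \<delta> t > 0"
    and "\<And>t s. t \<in> {a..<b} \<Longrightarrow> t < s \<Longrightarrow> s < t + \<delta> t \<Longrightarrow> G s - G t \<le> (f t + e) * (s - t)"
    and "\<And>t s. t \<in> {a<..b} \<Longrightarrow> t - \<delta> t < s \<Longrightarrow> s < t \<Longrightarrow> G t - G s \<le> (f t + e) * (t - s)"
proof -
  have "\<exists>\<delta>>0. (t \<in> {a..<b} \<longrightarrow> (\<forall>s. t < s \<longrightarrow> s < t + \<delta> \<longrightarrow> G s - G t \<le> (f t + e) * (s - t)))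
      \<and> (t \<in> {a<..b} \<longrightarrow> (\<forall>s. t - \<delta> < s \<longrightarrow> s < t \<longrightarrow> G t - G s \<le> (f t + e) * (t - s)))" for t
  proof -
    obtain \<delta>r where "\<delta>r > 0" and \<delta>r: "t \<in> {a..<b} \<longrightarrow>
        (\<forall>s. t < s \<longrightarrow> s < t + \<delta>r \<longrightarrow> G s - G t \<le> (f t + e) * (s - t))"
      using right_slope_le_imp_local_bound[OF right \<open>e > 0\<close>, of t] zero_less_one
      by (cases "t \<in> {a..<b}") blast+
    obtain \<delta>l where "\<delta>l > 0" and \<delta>l: "t \<in> {a<..b} \<longrightarrow>
        (\<forall>s. t - \<delta>l < s \<longrightarrow> s < t \<longrightarrow> G t - G s \<le> (f t + e) * (t - s))"
      using left_slope_le_imp_local_bound[OF left \<open>e > 0\<close>, of t] zero_less_one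
      by (cases "t \<in> {a<..b}") blast+
    show ?thesis
      using \<open>\<delta>r > 0\<close> \<open>\<delta>l > 0\<close> \<delta>r \<delta>l by (intro exI[of _ "min \<delta>r \<delta>l"]) auto
  qed
  then show thesis
    using that by metis
qed

text \<open>The Henstock--Kurzweil form of the fundamental theorem of calculus, with one-sided
  Dini bounds in place of derivatives: no continuity of \<open>G\<close> is needed since both sides
  are controlled.\<close>

lemma increment_le_integral_if_slope_le:
  fixes G f :: "real \<Rightarrow> real"
  assumes "a \<le> b" and int: "f integrable_on {a..b}"
    and right: "\<And>t. t \<in> {a..<b} \<Longrightarrow> right_slope_le G (f t) t"
    and left: "\<And>t. t \<in> {a<..b} \<Longrightarrow> left_slope_le G (f t) t"
  shows "G b - G a \<le> integral {a..b} f"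
proof (rule field_le_epsilon)
  fix \<epsilon> :: real assume "\<epsilon> > 0"
  define e where "e = \<epsilon> / (b - a + 1)"
  have "b - a + 1 > 0"
    using \<open>a \<le> b\<close> by simp
  then have "e > 0" and "e * (b - a + 1) = \<epsilon>"
    using \<open>\<epsilon> > 0\<close> by (simp_all add: e_def)
  then have \<epsilon>: "e + e * (b - a) = \<epsilon>"
    by (simp add: algebra_simps)
  obtain \<gamma> where "gauge \<gamma>" and \<gamma>: "\<And>\<D>. \<D> tagged_division_of {a..b} \<Longrightarrow> \<gamma> fine \<D> \<Longrightarrow>
      norm ((\<Sum>(x, K)\<in>\<D>. Henstock_Kurzweil_Integration.content K *\<^sub>R f x) - integral {a..b} f) < e"
    using int[unfolded has_integral_integral] \<open>e > 0\<close> unfolding has_integral_real by meson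
  obtain \<delta> where "\<And>t. \<delta> t > 0"
    and right_bound: "\<And>t s. t \<in> {a..<b} \<Longrightarrow> t < s \<Longrightarrow> s < t + \<delta> t \<Longrightarrow> G s - G t \<le> (f t + e) * (s - t)"
    and left_bound: "\<And>t s. t \<in> {a<..b} \<Longrightarrow> t - \<delta> t < s \<Longrightarrow> s < t \<Longrightarrow> G t - G s \<le> (f t + e) * (t - s)"
    using slope_le_imp_gauge[OF right left \<open>e > 0\<close>] by blast
  then have "gauge (\<lambda>t. ball t (\<delta> t))"
    by (simp add: gauge_ball_dependent)
  then obtain \<D> where div: "\<D> tagged_division_of {a..b}" and "(\<lambda>t. \<gamma> t \<inter> ball t (\<delta> t)) fine \<D>"
    using fine_division_exists_real gauge_Int \<open>gauge \<gamma>\<close> by blast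
  then have "\<gamma> fine \<D>" and fine: "(\<lambda>t. ball t (\<delta> t)) fine \<D>"
    by (auto simp: fine_Int)
  have "G b - G a \<le> (\<Sum>(x, K)\<in>\<D>. Henstock_Kurzweil_Integration.content K *\<^sub>R f x) + e * (b - a)"
    by (rule increment_le_tagged_sum[OF \<open>a \<le> b\<close> div fine right_bound left_bound])
  also have "\<dots> \<le> integral {a..b} f + \<epsilon>"
    using \<gamma>[OF div \<open>\<gamma> fine \<D>\<close>] \<epsilon> by (simp add: abs_less_iff)
  finally show "G b - G a \<le> integral {a..b} f + \<epsilon>" .
qed

lemma eventually_le_line_at_right:
  fixes h :: "real \<Rightarrow> real"
  assumes "c < b" and cont: "continuous_on {c..b} h" and "a \<le> c" and "e > 0"
    and below: "h c \<le> e * (c - a)"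
    and der: "0 \<le> h c \<Longrightarrow> \<exists>D\<le>0. (h has_real_derivative D) (at_right c)"
  shows "\<forall>\<^sub>F s in at_right c. h s \<le> e * (s - a)"
proof (cases "h c < 0")
  case True
  have "(h \<longlongrightarrow> h c) (at_right c)"
    using cont \<open>c < b\<close> by (rule continuous_on_Icc_at_rightD)
  then have "\<forall>\<^sub>F s in at_right c. h s < 0"
    using True by (rule order_tendstoD)
  with eventually_at_right_less[of c] show ?thesis
  proof eventually_elim
    case (elim s)
    with \<open>a \<le> c\<close> \<open>e > 0\<close> have "0 \<le> e * (s - a)" by simp
    with elim show ?case by simp
  qed
next
  case False
  then obtain D where "D \<le> 0" "(h has_real_derivative D) (at_right c)"
    using der by force
  then have "\<forall>\<^sub>F s in at_right c. h s - h c \<le> (D + e) * (s - c)"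
    using \<open>e > 0\<close> right_slope_le_if_has_derivative by (auto simp: right_slope_le_def)
  with eventually_at_right_less[of c] show ?thesis
  proof eventually_elim
    case (elim s)
    then have "h s \<le> h c + e * (s - c)"
      using \<open>D \<le> 0\<close> mult_right_mono[of D 0 "s - c"] by (simp add: algebra_simps)
    with below show ?case by (simp add: algebra_simps)
  qed
qed

text \<open>For \<open>e > 0\<close>, the last point of \<open>{a..b}\<close> with \<open>h x \<le> e * (x - a)\<close> must be \<open>b\<close>,
  because the inequality propagates to the right of any such point.\<close>

lemma nonpos_if_right_derivative_nonpos:
  fixes h :: "real \<Rightarrow> real"
  assumes "a \<le> b" and cont: "continuous_on {a..b} h" and "h a \<le> 0"
    and der: "\<And>x. x \<in> {a..<b} \<Longrightarrow> 0 \<le> h x \<Longrightarrow> \<exists>D\<le>0. (h has_real_derivative D) (at_right x)"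
  shows "h b \<le> 0"
proof (rule field_le_epsilon)
  fix \<epsilon> :: real assume "\<epsilon> > 0"
  define e where "e = \<epsilon> / (b - a + 1)"
  have "e > 0" and "e * (b - a) \<le> \<epsilon>"
    using \<open>\<epsilon> > 0\<close> \<open>a \<le> b\<close> by (simp_all add: e_def field_simps)
  define S where "S = {a..b} \<inter> (\<lambda>x. h x - e * (x - a)) -` {..0}"
  have "closed S"
    unfolding S_def by (intro continuous_closed_preimage continuous_intros cont)
  moreover have "a \<in> S" and bdd: "bdd_above S"
    using \<open>a \<le> b\<close> \<open>h a \<le> 0\<close> by (auto simp: S_def bdd_above_def)
  ultimately have "Sup S \<in> S"
    using closed_contains_Sup by blast
  define c where "c = Sup S"
  have "c = b"
  proof (rule ccontr)
    assume "c \<noteq> b"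
    with \<open>Sup S \<in> S\<close> have c: "a \<le> c" "c < b" "h c \<le> e * (c - a)"
      by (auto simp: S_def c_def)
    have "\<forall>\<^sub>F s in at_right c. h s \<le> e * (s - a)"
      using c der[of c] \<open>e > 0\<close> continuous_on_subset[OF cont]
      by (intro eventually_le_line_at_right[of c b]) auto
    moreover have "\<forall>\<^sub>F s in at_right c. c < s \<and> s \<le> b"
      using c by (auto simp: eventually_at_right_field intro!: exI[of _ b])
    ultimately have "\<forall>\<^sub>F s in at_right c. False"
    proof eventually_elim
      case (elim s)
      then have "s \<in> S" using c by (auto simp: S_def)
      then show False using elim cSup_upper[OF _ bdd] by (fastforce simp: c_def)
    qed
    then show False by (simp add: eventually_False)
  qed
  with \<open>Sup S \<in> S\<close> have "h b \<le> e * (b - a)"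
    by (simp add: S_def c_def)
  with \<open>e * (b - a) \<le> \<epsilon>\<close> show "h b \<le> 0 + \<epsilon>" by simp
qed

lemma convex_on_ge_gderiv_tangent:
  fixes g :: "'a::real_inner \<Rightarrow> real"
  assumes cvx: "convex_on UNIV g" and "GDERIV g x :> D"
  shows "(y - x) \<bullet> D \<le> g y - g x"
proof -
  define \<phi> where "\<phi> t = g (x + t *\<^sub>R (y - x))" for t :: real
  have "((\<lambda>t::real. x + t *\<^sub>R (y - x)) has_derivative (\<lambda>t. t *\<^sub>R (y - x))) (at 0)"
    by (auto intro!: derivative_eq_intros)
  moreover have "(g has_derivative (\<lambda>h. h \<bullet> D)) (at (x + 0 *\<^sub>R (y - x)))"
    using assms(2) by (simp add: gderiv_def)
  ultimately have "(\<phi> has_derivative (\<lambda>t. (t *\<^sub>R (y - x)) \<bullet> D)) (at 0)"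
    unfolding \<phi>_def by (rule has_derivative_compose)
  then have "(\<phi> has_real_derivative (y - x) \<bullet> D) (at 0)"
    unfolding has_field_derivative_def by (rule has_derivative_eq_rhs) (auto simp: fun_eq_iff)
  then have lim: "((\<lambda>t. (\<phi> t - \<phi> 0) / (t - 0)) \<longlongrightarrow> (y - x) \<bullet> D) (at_right 0)"
    by (simp add: has_field_derivative_iff filterlim_at_split)
  have "\<forall>\<^sub>F t in at_right (0::real). 0 < t \<and> t < 1"
    by (auto simp: eventually_at_right_field intro!: exI[of _ 1])
  then have "\<forall>\<^sub>F t in at_right 0. (\<phi> t - \<phi> 0) / (t - 0) \<le> g y - g x"
  proof eventually_elim
    case (elim t)
    have "\<phi> t = g ((1 - t) *\<^sub>R x + t *\<^sub>R y)"
      by (simp add: \<phi>_def algebra_simps)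
    also have "\<dots> \<le> (1 - t) * g x + t * g y"
      using elim cvx by (intro convex_onD) auto
    finally have "\<phi> t - \<phi> 0 \<le> t * (g y - g x)"
      by (simp add: \<phi>_def algebra_simps)
    with elim show ?case
      by (simp add: divide_le_eq mult.commute)
  qed
  with lim show ?thesis
    by (rule tendsto_upperbound) simp
qed

lemma convex_on_gderiv_monotone:
  fixes g :: "'a::real_inner \<Rightarrow> real"
  assumes "convex_on UNIV g" and "\<And>x. GDERIV g x :> D x"
  shows "0 \<le> (D x - D y) \<bullet> (x - y)"
  using convex_on_ge_gderiv_tangent[OF assms(1) assms(2), of x y]
    convex_on_ge_gderiv_tangent[OF assms(1) assms(2), of y x]
  by (simp add: inner_diff_left inner_diff_right inner_commute)

lemma C2_fun_gderiv_differentiable: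
  fixes g :: "'a::euclidean_space \<Rightarrow> real"
  assumes "C2_fun g" and gd: "\<And>x. GDERIV g x :> D x"
  shows "D differentiable (at x)"
proof -
  obtain f' :: "'a \<Rightarrow> ('a \<Rightarrow>\<^sub>L real)" and f'' where
    f': "\<And>x. (g has_derivative blinfun_apply (f' x)) (at x)" and
    f'': "\<And>x. (f' has_derivative blinfun_apply (f'' x)) (at x)"
    using assms(1) unfolding C2_fun_def by blast
  have "blinfun_apply (f' y) = (\<lambda>h. h \<bullet> D y)" for y
    using has_derivative_unique[OF f'[of y]] gd[of y] by (simp add: gderiv_def)
  then have "D = (\<lambda>y. \<Sum>b\<in>Basis. blinfun_apply (f' y) b *\<^sub>R b)"
    by (simp add: fun_eq_iff inner_commute[of _ "D _"] euclidean_representation)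
  moreover have "((\<lambda>y. \<Sum>b\<in>Basis. blinfun_apply (f' y) b *\<^sub>R b) has_derivative
      (\<lambda>v. \<Sum>b\<in>Basis. blinfun_apply (f'' x v) b *\<^sub>R b)) (at x)"
    by (intro has_derivative_sum has_derivative_scaleR_left
        bounded_linear.has_derivative[OF blinfun.bounded_linear_left f''])
  ultimately show ?thesis
    unfolding differentiable_def by auto
qed

lemma has_vector_derivative_at_right_quotient:
  fixes f :: "real \<Rightarrow> 'b::real_normed_vector"
  assumes "(f has_vector_derivative f') (at_right t)"
  shows "((\<lambda>s. (1 / (s - t)) *\<^sub>R (f s - f t)) \<longlongrightarrow> f') (at_right t)"
proof -
  have "((\<lambda>s. (1 / norm (s - t)) *\<^sub>R (f s - (f t + (s - t) *\<^sub>R f'))) \<longlongrightarrow> 0) (at_right t)"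
    using assms unfolding has_vector_derivative_def has_derivative_within by blast
  then have "((\<lambda>s. (1 / norm (s - t)) *\<^sub>R (f s - (f t + (s - t) *\<^sub>R f')) + f') \<longlongrightarrow> f') (at_right t)"
    using tendsto_add[OF _ tendsto_const, of _ 0 _ f'] by simp
  moreover have "\<forall>\<^sub>F s in at_right t.
      (1 / norm (s - t)) *\<^sub>R (f s - (f t + (s - t) *\<^sub>R f')) + f' = (1 / (s - t)) *\<^sub>R (f s - f t)"
    using eventually_at_right_less[of t]
  proof eventually_elim
    case (elim s)
    then have "norm (s - t) = s - t" and quot: "s / (s - t) = 1 + t / (s - t)"
      by (simp_all add: field_simps)
    then show ?case
      by (simp add: scaleR_diff_right algebra_simps quot scaleR_add_left)
  qed
  ultimately show ?thesis
    by (rule Lim_transform_eventually)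
qed

lemma right_derivatives_inner_nonneg:
  fixes u q :: "real \<Rightarrow> 'a::real_inner"
  assumes "(u has_vector_derivative v) (at_right t)"
    and "(q has_vector_derivative w) (at_right t)"
    and mono: "\<And>s. 0 \<le> (q s - q t) \<bullet> (u s - u t)"
  shows "0 \<le> w \<bullet> v"
proof -
  have "((\<lambda>s. ((1 / (s - t)) *\<^sub>R (q s - q t)) \<bullet> ((1 / (s - t)) *\<^sub>R (u s - u t))) \<longlongrightarrow> w \<bullet> v)
      (at_right t)"
    using assms(1,2) by (intro tendsto_inner has_vector_derivative_at_right_quotient)
  moreover have "0 \<le> ((1 / (s - t)) *\<^sub>R (q s - q t)) \<bullet> ((1 / (s - t)) *\<^sub>R (u s - u t))" for s
    using mono[of s] by (simp add: power2_eq_square[symmetric])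
  ultimately show ?thesis
    by (intro tendsto_lowerbound) auto
qed

lemma eventually_at_right_if_within_atLeast:
  fixes t :: real
  assumes "\<forall>\<^sub>F s in at t within {a..}. P s" and "a \<le> t"
  shows "\<forall>\<^sub>F s in at_right t. P s"
  using assms(2) by (intro filter_leD[OF at_le assms(1)]) auto

locale multiplier_dynamics =
  fixes p :: nat
    and g :: "nat \<Rightarrow> 'a::euclidean_space \<Rightarrow> real"
    and Dg :: "nat \<Rightarrow> 'a \<Rightarrow> 'a"
    and tau :: "nat \<Rightarrow> real"
    and u :: "real \<Rightarrow> 'a"
    and us :: "real \<Rightarrow> 'a"
    and mu :: "nat \<Rightarrow> real \<Rightarrow> real"
    and ys :: "real \<Rightarrow> 'a"
  assumes convex: "\<And>i. i \<in> {1..p} \<Longrightarrow> convex_on UNIV (g i)"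
    and C2: "\<And>i. i \<in> {1..p} \<Longrightarrow> C2_fun (g i)"
    and grad: "\<And>i x. i \<in> {1..p} \<Longrightarrow> GDERIV (g i) x :> Dg i x"
    and tau_pos: "\<And>i. i \<in> {1..p} \<Longrightarrow> tau i > 0"
    and inp: "\<And>t. t \<ge> 0 \<Longrightarrow> (u has_vector_derivative us t) (at t within {0..})"
    and init: "\<And>i. i \<in> {1..p} \<Longrightarrow> mu i 0 \<ge> 0"
    and cont: "\<And>i. i \<in> {1..p} \<Longrightarrow> continuous_on {0..} (mu i)"
    and dyn: "\<And>i t. i \<in> {1..p} \<Longrightarrow> t \<ge> 0 \<Longrightarrow>
        (mu i has_real_derivative proj_plus (g i (u t)) (mu i t) / tau i) (at_right t)"
    and outp: "\<And>t. t \<ge> 0 \<Longrightarrow>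
        ((\<lambda>s. \<Sum>i\<in>{1..p}. mu i s *\<^sub>R Dg i (u s)) has_vector_derivative ys t) (at_right t)"
begin

text \<open>\<open>rate i t\<close> is \<open>\<tau>\<^sub>i \<mu>\<^sub>i'(t)\<close>; \<open>energy i t = \<tau>\<^sub>i \<mu>\<^sub>i'(t)\<^sup>2 / 2\<close> agrees with
  \<open>active_energy i t\<close> while constraint \<open>i\<close> is active.\<close>

definition rate :: "nat \<Rightarrow> real \<Rightarrow> real" where
  "rate i t = proj_plus (g i (u t)) (mu i t)"

definition energy :: "nat \<Rightarrow> real \<Rightarrow> real" where
  "energy i t = (rate i t)\<^sup>2 / (2 * tau i)"

definition active_energy :: "nat \<Rightarrow> real \<Rightarrow> real" where
  "active_energy i t = (g i (u t))\<^sup>2 / (2 * tau i)"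

definition total_energy :: "real \<Rightarrow> real" where
  "total_energy t = (\<Sum>i\<in>{1..p}. energy i t)"

definition energy_flux :: "nat \<Rightarrow> real \<Rightarrow> real" where
  "energy_flux i t = rate i t * (us t \<bullet> Dg i (u t)) / tau i"

definition gradient_rate :: "nat \<Rightarrow> real \<Rightarrow> 'a" where
  "gradient_rate i t = vector_derivative (\<lambda>s. Dg i (u s)) (at t within {0..})"

lemma constraint_has_derivative:
  assumes "i \<in> {1..p}" and "0 \<le> t"
  shows "((\<lambda>s. g i (u s)) has_real_derivative us t \<bullet> Dg i (u t)) (at t within {0..})"
proof -
  have "(u has_derivative (\<lambda>h. h *\<^sub>R us t)) (at t within {0..})"
    using inp[OF assms(2)] by (simp add: has_vector_derivative_def)
  moreover have "(g i has_derivative (\<lambda>h. h \<bullet> Dg i (u t))) (at (u t))"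
    using grad[OF assms(1)] by (simp add: gderiv_def)
  ultimately show ?thesis
    unfolding has_field_derivative_def
    by (rule has_derivative_eq_rhs[OF has_derivative_compose]) (auto simp: fun_eq_iff)
qed

lemma constraint_tendsto:
  assumes "i \<in> {1..p}" and "0 \<le> t"
  shows "((\<lambda>s. g i (u s)) \<longlongrightarrow> g i (u t)) (at t within {0..})"
  using DERIV_continuous[OF constraint_has_derivative[OF assms]] by (simp add: continuous_within)

lemma active_energy_has_derivative:
  assumes "i \<in> {1..p}" and "0 \<le> t"
  shows "(active_energy i has_real_derivative g i (u t) * (us t \<bullet> Dg i (u t)) / tau i)
    (at t within {0..})"
  using constraint_has_derivative[OF assms] tau_pos[OF assms(1)] unfolding active_energy_def
  by (auto intro!: derivative_eq_intros simp: field_simps power2_eq_square)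

lemma energy_nonneg: "i \<in> {1..p} \<Longrightarrow> 0 \<le> energy i t"
  using tau_pos[of i] by (simp add: energy_def)

lemma energy_le_active_energy: "i \<in> {1..p} \<Longrightarrow> energy i t \<le> active_energy i t"
  using tau_pos[of i] by (auto simp: energy_def active_energy_def rate_def proj_plus_def
      intro!: divide_right_mono)

lemma mu_nonneg:
  assumes i: "i \<in> {1..p}" and "0 \<le> t"
  shows "0 \<le> mu i t"
proof -
  have "- mu i t \<le> 0"
  proof (rule nonpos_if_right_derivative_nonpos[of 0 t "\<lambda>s. - mu i s"])
    show "continuous_on {0..t} (\<lambda>s. - mu i s)"
      using cont[OF i] by (auto intro!: continuous_intros intro: continuous_on_subset)
    fix x assume x: "x \<in> {0..<t}" and "0 \<le> - mu i x"
    then have "0 \<le> rate i x / tau i"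
      using tau_pos[OF i] by (simp add: rate_def proj_plus_def)
    moreover have "((\<lambda>s. - mu i s) has_real_derivative - (rate i x / tau i)) (at_right x)"
      using dyn[OF i, of x] x by (auto intro!: derivative_intros simp: rate_def)
    ultimately show "\<exists>D\<le>0. ((\<lambda>s. - mu i s) has_real_derivative D) (at_right x)"
      by (intro exI[of _ "- (rate i x / tau i)"]) auto
  qed (use \<open>0 \<le> t\<close> init[OF i] in auto)
  then show ?thesis by simp
qed

lemma eventually_active:
  assumes i: "i \<in> {1..p}" and "0 \<le> t" and "0 < mu i t \<or> 0 < g i (u t)"
  shows "\<forall>\<^sub>F s in at t within {0..}. 0 < mu i s \<or> 0 < g i (u s)"
proof (cases "0 < mu i t")
  case True
  have "(mu i \<longlongrightarrow> mu i t) (at t within {0..})"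
    using cont[OF i] \<open>0 \<le> t\<close> by (simp add: continuous_on_def)
  from order_tendstoD(1)[OF this True] show ?thesis
    by eventually_elim simp
next
  case False
  with assms(3) have "0 < g i (u t)" by simp
  from order_tendstoD(1)[OF constraint_tendsto[OF i \<open>0 \<le> t\<close>] this] show ?thesis
    by eventually_elim simp
qed

lemma energy_slope_le_active:
  assumes i: "i \<in> {1..p}" and "0 \<le> t" and active: "0 < mu i t \<or> 0 < g i (u t)"
  shows "right_slope_le (energy i) (energy_flux i t) t"
    and "0 < t \<Longrightarrow> left_slope_le (energy i) (energy_flux i t) t"
proof -
  have deriv: "(active_energy i has_real_derivative energy_flux i t) (at t within {0..})"
    using active_energy_has_derivative[OF i \<open>0 \<le> t\<close>] active
    by (auto simp: energy_flux_def rate_def proj_plus_def)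
  have "\<forall>\<^sub>F s in at t within {0..}. 0 < mu i s \<or> 0 < g i (u s)"
    using i \<open>0 \<le> t\<close> active by (rule eventually_active)
  then have near: "\<forall>\<^sub>F s in at t within {0..}.
      energy i s - energy i t = active_energy i s - active_energy i t"
    by eventually_elim (use active in \<open>auto simp: energy_def active_energy_def rate_def proj_plus_def\<close>)
  show "right_slope_le (energy i) (energy_flux i t) t"
  proof (rule right_slope_le_increment_mono)
    show "right_slope_le (active_energy i) (energy_flux i t) t"
      using \<open>0 \<le> t\<close> by (intro right_slope_le_if_has_derivative DERIV_subset[OF deriv]) auto
    show "\<forall>\<^sub>F s in at_right t. energy i s - energy i t \<le> active_energy i s - active_energy i t"
      using eventually_at_right_if_within_atLeast[OF near \<open>0 \<le> t\<close>] by (auto elim: eventually_mono)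
  qed
  assume "0 < t"
  then have at_t: "at t within {0..} = at t"
    by (intro at_within_interior) auto
  show "left_slope_le (energy i) (energy_flux i t) t"
  proof (rule left_slope_le_increment_mono)
    show "left_slope_le (active_energy i) (energy_flux i t) t"
      using deriv by (intro left_slope_le_if_has_derivative) (simp add: at_t)
    show "\<forall>\<^sub>F s in at_left t. energy i t - energy i s \<le> active_energy i t - active_energy i s"
      using near unfolding at_t eventually_at_split by (auto elim: eventually_mono)
  qed
qed

lemma rate_eventually_zero:
  assumes i: "i \<in> {1..p}" and "0 \<le> t" and "mu i t = 0" and "g i (u t) < 0"
  shows "\<forall>\<^sub>F s in at_right t. rate i s = 0"
proof -
  have "\<forall>\<^sub>F s in at t within {0..}. g i (u s) < 0"
    using order_tendstoD(2)[OF constraint_tendsto[OF i \<open>0 \<le> t\<close>] \<open>g i (u t) < 0\<close>] .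
  then have "\<forall>\<^sub>F s in at_right t. g i (u s) < 0"
    using \<open>0 \<le> t\<close> by (rule eventually_at_right_if_within_atLeast)
  then obtain r where "t < r" and neg: "\<And>s. t < s \<Longrightarrow> s < r \<Longrightarrow> g i (u s) < 0"
    by (auto simp: eventually_at_right_field)
  have "mu i s \<le> 0" if s: "t < s" "s < r" for s
  proof (rule nonpos_if_right_derivative_nonpos[of t s "mu i"])
    show "continuous_on {t..s} (mu i)"
      using cont[OF i] \<open>0 \<le> t\<close> by (auto intro: continuous_on_subset)
    fix x assume x: "x \<in> {t..<s}"
    then have "g i (u x) < 0"
      using neg s \<open>g i (u t) < 0\<close> by (cases "x = t") auto
    then have "rate i x / tau i \<le> 0"
      using tau_pos[OF i] by (auto simp: rate_def proj_plus_def divide_nonpos_pos)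
    then show "\<exists>D\<le>0. (mu i has_real_derivative D) (at_right x)"
      using dyn[OF i, of x] x \<open>0 \<le> t\<close> by (auto simp: rate_def)
  qed (use s \<open>mu i t = 0\<close> in auto)
  then have "rate i s = 0" if "t < s" "s < r" for s
    using that neg mu_nonneg[OF i, of s] \<open>0 \<le> t\<close> by (force simp: rate_def proj_plus_def)
  then show ?thesis
    using \<open>t < r\<close> by (auto simp: eventually_at_right_field)
qed

lemma energy_right_slope_le:
  assumes i: "i \<in> {1..p}" and "0 \<le> t"
  shows "right_slope_le (energy i) (energy_flux i t) t"
proof (cases "0 < mu i t \<or> 0 < g i (u t)")
  case True
  then show ?thesis by (rule energy_slope_le_active(1)[OF i \<open>0 \<le> t\<close>])
next
  case False
  then have "mu i t = 0" and "g i (u t) \<le> 0"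
    using mu_nonneg[OF i \<open>0 \<le> t\<close>] by auto
  then have "rate i t = 0"
    by (simp add: rate_def proj_plus_def)
  then have rest: "energy i t = 0" "energy_flux i t = 0"
    by (simp_all add: energy_def energy_flux_def)
  show ?thesis
  proof (cases "g i (u t) = 0")
    case True
    text \<open>Leaving zero through a zero of \<open>g\<^sub>i\<close>: the energy is squeezed below the
      active energy, whose derivative vanishes there.\<close>
    have "right_slope_le (active_energy i) 0 t"
      using active_energy_has_derivative[OF i \<open>0 \<le> t\<close>] \<open>0 \<le> t\<close> True
      by (intro right_slope_le_if_has_derivative) (auto intro: DERIV_subset)
    then show ?thesis
      unfolding rest(2) using energy_le_active_energy[OF i] True rest(1)
      by (elim right_slope_le_increment_mono) (simp add: active_energy_def)
  next
    case False
    with \<open>g i (u t) \<le> 0\<close> have "g i (u t) < 0" by simp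
    have "right_slope_le (\<lambda>_. 0) 0 t"
      by (intro right_slope_le_if_has_derivative DERIV_const)
    moreover have "\<forall>\<^sub>F s in at_right t. energy i s - energy i t \<le> 0 - 0"
      using rate_eventually_zero[OF i \<open>0 \<le> t\<close> \<open>mu i t = 0\<close> \<open>g i (u t) < 0\<close>]
      by eventually_elim (simp add: energy_def \<open>rate i t = 0\<close>)
    ultimately show ?thesis
      unfolding rest(2) by (rule right_slope_le_increment_mono)
  qed
qed

lemma energy_left_slope_le:
  assumes i: "i \<in> {1..p}" and "0 < t"
  shows "left_slope_le (energy i) (energy_flux i t) t"
proof (cases "0 < mu i t \<or> 0 < g i (u t)")
  case True
  then show ?thesis using energy_slope_le_active(2)[OF i] \<open>0 < t\<close> by simp
next
  case False
  then have rest: "energy i t = 0" "energy_flux i t = 0"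
    by (auto simp: energy_def energy_flux_def rate_def proj_plus_def)
  have "left_slope_le (\<lambda>_. 0) 0 t"
    by (intro left_slope_le_if_has_derivative DERIV_const)
  then show ?thesis
    unfolding rest(2) using energy_nonneg[OF i] rest(1)
    by (elim left_slope_le_increment_mono) simp
qed

lemma gradient_has_vector_derivative:
  assumes i: "i \<in> {1..p}" and "0 \<le> t"
  shows "((\<lambda>s. Dg i (u s)) has_vector_derivative gradient_rate i t) (at t within {0..})"
proof -
  have "u differentiable (at t within {0..})"
    using inp[OF \<open>0 \<le> t\<close>] by (rule differentiableI_vector)
  moreover have "Dg i differentiable (at (u t) within u ` {0..})"
    using C2_fun_gderiv_differentiable[OF C2[OF i] grad[OF i]] by (rule differentiable_at_withinI)
  ultimately have "(Dg i \<circ> u) differentiable (at t within {0..})"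
    by (rule differentiable_chain_within)
  then show ?thesis
    unfolding gradient_rate_def vector_derivative_works[symmetric] by (simp add: o_def)
qed

lemma gradient_rate_inner_nonneg:
  assumes i: "i \<in> {1..p}" and "0 \<le> t"
  shows "0 \<le> gradient_rate i t \<bullet> us t"
proof (rule right_derivatives_inner_nonneg)
  show "(u has_vector_derivative us t) (at_right t)"
    by (rule has_vector_derivative_within_subset[OF inp]) (use \<open>0 \<le> t\<close> in auto)
  show "((\<lambda>s. Dg i (u s)) has_vector_derivative gradient_rate i t) (at_right t)"
    by (rule has_vector_derivative_within_subset[OF gradient_has_vector_derivative[OF assms]])
      (use \<open>0 \<le> t\<close> in auto)
  show "0 \<le> (Dg i (u s) - Dg i (u t)) \<bullet> (u s - u t)" for s
    by (rule convex_on_gderiv_monotone[OF convex[OF i] grad[OF i]])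
qed

lemma output_eq:
  assumes "0 \<le> t"
  shows "ys t = (\<Sum>i\<in>{1..p}. mu i t *\<^sub>R gradient_rate i t + (rate i t / tau i) *\<^sub>R Dg i (u t))"
proof (rule vector_derivative_unique_within[OF _ outp[OF assms]])
  show "((\<lambda>s. \<Sum>i\<in>{1..p}. mu i s *\<^sub>R Dg i (u s)) has_vector_derivative
      (\<Sum>i\<in>{1..p}. mu i t *\<^sub>R gradient_rate i t + (rate i t / tau i) *\<^sub>R Dg i (u t))) (at_right t)"
    unfolding rate_def using assms
    by (intro has_vector_derivative_sum has_vector_derivative_scaleR dyn
        has_vector_derivative_within_subset[OF gradient_has_vector_derivative]) auto
qed simp

lemma energy_flux_sum_le_supply:
  assumes "0 \<le> t"
  shows "(\<Sum>i\<in>{1..p}. energy_flux i t) \<le> us t \<bullet> ys t"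
proof -
  have "(\<Sum>i\<in>{1..p}. energy_flux i t)
      \<le> (\<Sum>i\<in>{1..p}. mu i t * (gradient_rate i t \<bullet> us t) + energy_flux i t)"
    using mu_nonneg gradient_rate_inner_nonneg assms by (intro sum_mono) simp
  also have "\<dots> = us t \<bullet> ys t"
    unfolding output_eq[OF assms] energy_flux_def
    by (simp add: inner_sum_right inner_add_right inner_commute)
  finally show ?thesis .
qed

lemma total_energy_increment_le:
  assumes "0 \<le> a" and "a \<le> b" and "(\<lambda>t. us t \<bullet> ys t) integrable_on {a..b}"
  shows "total_energy b - total_energy a \<le> integral {a..b} (\<lambda>t. us t \<bullet> ys t)"
  unfolding total_energy_def
proof (rule increment_le_integral_if_slope_le[OF \<open>a \<le> b\<close> assms(3)])
  fix t
  show "t \<in> {a..<b} \<Longrightarrow> right_slope_le (\<lambda>s. \<Sum>i\<in>{1..p}. energy i s) (us t \<bullet> ys t) t"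
    using assms(1)
    by (intro right_slope_le_sum[where D="\<lambda>i. energy_flux i t"] energy_right_slope_le
        energy_flux_sum_le_supply) auto
  show "t \<in> {a<..b} \<Longrightarrow> left_slope_le (\<lambda>s. \<Sum>i\<in>{1..p}. energy i s) (us t \<bullet> ys t) t"
    using assms(1)
    by (intro left_slope_le_sum[where D="\<lambda>i. energy_flux i t"] energy_left_slope_le
        energy_flux_sum_le_supply) auto
qed

lemma storage_eq_total_energy:
  "storage p tau (switching_signal p g u mu t) (\<lambda>i. rate i t / tau i) = total_energy t"
proof -
  have "storage p tau (switching_signal p g u mu t) (\<lambda>i. rate i t / tau i)
      = (\<Sum>i\<in>{1..p} - switching_signal p g u mu t. energy i t)"
    unfolding storage_def sum_distrib_left
    by (intro sum.cong) (auto simp: energy_def power2_eq_square dest!: tau_pos)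
  also have "\<dots> = total_energy t"
    unfolding total_energy_def
    by (intro sum.mono_neutral_left) (auto simp: switching_signal_def energy_def rate_def proj_plus_def)
  finally show ?thesis .
qed

end

theorem proposition2:
  fixes p :: nat
    and g :: "nat \<Rightarrow> 'a::euclidean_space \<Rightarrow> real"
    and Dg :: "nat \<Rightarrow> 'a \<Rightarrow> 'a"
    and tau :: "nat \<Rightarrow> real"
    and u :: "real \<Rightarrow> 'a"
    and us :: "real \<Rightarrow> 'a"
    and mu :: "nat \<Rightarrow> real \<Rightarrow> real"
    and ys :: "real \<Rightarrow> 'a"
    and sp :: "nat set"
    and ti tj :: real
  assumes convex: "\<And>i. i \<in> {1..p} \<Longrightarrow> convex_on UNIV (g i)"
    and C2: "\<And>i. i \<in> {1..p} \<Longrightarrow> C2_fun (g i)"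
    and grad: "\<And>i x. i \<in> {1..p} \<Longrightarrow> GDERIV (g i) x :> Dg i x"
    and tau_pos: "\<And>i. i \<in> {1..p} \<Longrightarrow> tau i > 0"
    and inp: "\<And>t. t \<ge> 0 \<Longrightarrow> (u has_vector_derivative us t) (at t within {0..})"
    and init: "\<And>i. i \<in> {1..p} \<Longrightarrow> mu i 0 \<ge> 0"
    and cont: "\<And>i. i \<in> {1..p} \<Longrightarrow> continuous_on {0..} (mu i)"
    and dyn: "\<And>i t. i \<in> {1..p} \<Longrightarrow> t \<ge> 0 \<Longrightarrow>
        (mu i has_real_derivative proj_plus (g i (u t)) (mu i t) / tau i) (at_right t)"
    and outp: "\<And>t. t \<ge> 0 \<Longrightarrow>
        ((\<lambda>s. \<Sum>i\<in>{1..p}. mu i s *\<^sub>R Dg i (u s)) has_vector_derivative ys t) (at_right t)"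
    and ti_sw: "switching_time (switching_signal p g u mu) ti"
    and tj_sw: "switching_time (switching_signal p g u mu) tj"
    and tij: "ti < tj"
    and sig_ti: "switching_signal p g u mu ti = sp"
    and sig_tj: "switching_signal p g u mu tj = sp"
    and between: "\<And>tk. switching_time (switching_signal p g u mu) tk \<Longrightarrow> ti < tk \<Longrightarrow> tk < tj \<Longrightarrow>
        switching_signal p g u mu tk \<noteq> sp"
    and integrable: "(\<lambda>t. us t \<bullet> ys t) integrable_on {ti..tj}"
  shows "storage p tau sp (\<lambda>i. proj_plus (g i (u tj)) (mu i tj) / tau i)
         - storage p tau sp (\<lambda>i. proj_plus (g i (u ti)) (mu i ti) / tau i)
         \<le> integral {ti..tj} (\<lambda>t. us t \<bullet> ys t)"
proof -
  interpret multiplier_dynamics p g Dg tau u us mu ys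
    using convex C2 grad tau_pos inp init cont dyn outp by unfold_locales
  text \<open>Only \<open>t\<^sub>i \<ge> 0\<close> and \<open>\<sigma>(t\<^sub>i) = \<sigma>(t\<^sub>j) = \<sigma>\<^sub>p\<close> are needed: the energy bound holds on
    every interval.\<close>
  have "0 \<le> ti"
    using ti_sw by (simp add: switching_time_def)
  from total_energy_increment_le[OF this less_imp_le[OF tij] integrable]
  show ?thesis
    using storage_eq_total_energy[of ti] storage_eq_total_energy[of tj] sig_ti sig_tj
    by (simp add: rate_def)
qed

end
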